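(* Let $n\ge2$, $\mathbf p^0\in\Delta_n$, $\mathbf p^{t+1}=F(\mathbf p^t)$. Then the sequence $L^t=\sum_k(p^t_k)^2$ converges, i.e. $L^\infty=\lim_{t\to\infty}L^t$ exists.
   Context: $\Delta_n=\{\mathbf p\in\mathbb R^n: p_i\ge 0,\ \sum_i p_i=1\}$. For $\mathbf p\in\Delta_n$, $L(\mathbf p)=\sum_{k}p_k^2$ and $F(\mathbf p)_i=p_i\frac{n-p_i}{n-L(\mathbf p)}$. *)

theory Defs
  imports "HOL-Analysis.Analysis"
begin

text \<open>Points of R^n are represented as functions nat => real, with coordinates
indexed by {..<n}; coordinates outside this range are irrelevant.\<close>

definition prob_simplex :: "nat \<Rightarrow> (nat \<Rightarrow> real) set" where
  "prob_simplex n = {p. (\<forall>i<n. p i \<ge> 0) \<and> (\<Sum>i<n. p i) = 1}"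

definition Lsq :: "nat \<Rightarrow> (nat \<Rightarrow> real) \<Rightarrow> real" where
  "Lsq n p = (\<Sum>k<n. (p k)^2)"

definition Fmap :: "nat \<Rightarrow> (nat \<Rightarrow> real) \<Rightarrow> (nat \<Rightarrow> real)" where
  "Fmap n p = (\<lambda>i. p i * (real n - p i) / (real n - Lsq n p))"

end

theory Submission
  imports Defs
begin

text \<open>The map F keeps the simplex invariant and
  \<open>L(F p) = (\<Sum>i. p\<^sub>i f(p\<^sub>i)) / (n - L(p))\<^sup>2\<close> with \<open>f x = x (n - x)\<^sup>2\<close>.
  Since f is concave on [0,1], Jensen's inequality at the points \<open>p\<^sub>i\<close> with weights
  \<open>p\<^sub>i\<close>, whose weighted mean is \<open>L(p)\<close>, gives \<open>L(F p) \<le> f(L(p)) / (n - L(p))\<^sup>2 = L(p)\<close>.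
  So \<open>L\<^sup>t\<close> is a decreasing sequence in [0,1] and converges.\<close>

lemma sum_weighted_le_supporting_line:
  fixes w x :: "'a \<Rightarrow> real"
  assumes "sum w A = 1" "\<And>i. i \<in> A \<Longrightarrow> w i \<ge> 0"
    and "\<And>i. i \<in> A \<Longrightarrow> f (x i) \<le> f c + s * (x i - c)"
    and "c = (\<Sum>i\<in>A. w i * x i)"
  shows "(\<Sum>i\<in>A. w i * f (x i)) \<le> f c"
proof -
  have "(\<Sum>i\<in>A. w i * f (x i)) \<le> (\<Sum>i\<in>A. w i * (f c + s * (x i - c)))"
    using assms(2,3) by (intro sum_mono mult_left_mono) auto
  also have "\<dots> = f c * sum w A + s * ((\<Sum>i\<in>A. w i * x i) - c * sum w A)"
    by (simp add: algebra_simps sum.distrib sum_subtractf sum_distrib_left)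
  also have "\<dots> = f c"
    using assms(1,4) by simp
  finally show ?thesis .
qed

lemma cubic_le_tangent:
  fixes x l m :: real
  assumes "x + 2 * l \<le> 2 * m"
  shows "x * (m - x)^2 \<le> l * (m - l)^2 + (m^2 - 4*m*l + 3*l^2) * (x - l)"
proof -
  have "l * (m - l)^2 + (m^2 - 4*m*l + 3*l^2) * (x - l) - x * (m - x)^2
        = (x - l)^2 * (2*m - x - 2*l)"
    by (simp add: algebra_simps power2_eq_square)
  moreover have "(x - l)^2 * (2*m - x - 2*l) \<ge> 0"
    using assms by simp
  ultimately show ?thesis by linarith
qed

lemma prob_simplex_le_1:
  assumes "q \<in> prob_simplex n" "i < n"
  shows "q i \<le> 1"
proof -
  have "q i \<le> (\<Sum>j<n. q j)"
    using assms by (intro member_le_sum) (auto simp: prob_simplex_def)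
  thus ?thesis using assms by (simp add: prob_simplex_def)
qed

lemma Lsq_nonneg: "Lsq n q \<ge> 0"
  unfolding Lsq_def by (intro sum_nonneg) auto

lemma Lsq_le_1:
  assumes "q \<in> prob_simplex n"
  shows "Lsq n q \<le> 1"
proof -
  have "Lsq n q \<le> (\<Sum>k<n. q k)"
    unfolding Lsq_def
  proof (rule sum_mono)
    fix k assume "k \<in> {..<n}"
    then have "0 \<le> q k" "q k \<le> 1"
      using assms prob_simplex_le_1 by (auto simp: prob_simplex_def)
    thus "(q k)^2 \<le> q k"
      using mult_left_le[of "q k" "q k"] by (simp add: power2_eq_square)
  qed
  thus ?thesis using assms by (simp add: prob_simplex_def)
qed

lemma Fmap_in_prob_simplex:
  assumes "q \<in> prob_simplex n" "n \<ge> 2"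
  shows "Fmap n q \<in> prob_simplex n"
proof -
  have denom_pos: "real n - Lsq n q > 0"
    using Lsq_le_1[OF assms(1)] assms(2) by simp
  have "Fmap n q i \<ge> 0" if "i < n" for i
  proof -
    have "0 \<le> q i" "q i \<le> 1"
      using assms(1) prob_simplex_le_1 that by (auto simp: prob_simplex_def)
    then show ?thesis
      unfolding Fmap_def using denom_pos assms(2) by simp
  qed
  moreover have "(\<Sum>i<n. Fmap n q i) = 1"
  proof -
    have "(\<Sum>i<n. q i * (real n - q i)) = real n * (\<Sum>i<n. q i) - Lsq n q"
      unfolding Lsq_def
      by (simp add: algebra_simps sum_subtractf sum_distrib_left power2_eq_square)
    then show ?thesis
      using assms(1) denom_pos
      by (simp add: Fmap_def prob_simplex_def flip: sum_divide_distrib)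
  qed
  ultimately show ?thesis by (simp add: prob_simplex_def)
qed

lemma Lsq_Fmap:
  "Lsq n (Fmap n q) = (\<Sum>i<n. q i * (q i * (real n - q i)^2)) / (real n - Lsq n q)^2"
proof -
  have "Lsq n (Fmap n q) = (\<Sum>i<n. (Fmap n q i)^2)"
    by (simp add: Lsq_def)
  then show ?thesis
    unfolding Fmap_def sum_divide_distrib
    by (simp add: power_divide power2_eq_square mult_ac)
qed

lemma Lsq_Fmap_le:
  assumes "q \<in> prob_simplex n" "n \<ge> 2"
  shows "Lsq n (Fmap n q) \<le> Lsq n q"
proof -
  define L where "L = Lsq n q"
  define m where "m = real n"
  have L_bounds: "0 \<le> L" "L \<le> 1"
    using Lsq_nonneg Lsq_le_1[OF assms(1)] by (auto simp: L_def)
  have "m \<ge> 2"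
    using assms(2) by (simp add: m_def)
  have "(\<Sum>i<n. q i * (q i * (m - q i)^2)) \<le> L * (m - L)^2"
  proof (rule sum_weighted_le_supporting_line[where f = "\<lambda>x. x * (m - x)^2"])
    show "(\<Sum>i<n. q i) = 1" "\<And>i. i \<in> {..<n} \<Longrightarrow> q i \<ge> 0"
      using assms(1) by (auto simp: prob_simplex_def)
    show "q i * (m - q i)^2 \<le> L * (m - L)^2 + (m^2 - 4*m*L + 3*L^2) * (q i - L)"
      if "i \<in> {..<n}" for i
      using prob_simplex_le_1[OF assms(1), of i] that L_bounds \<open>m \<ge> 2\<close>
      by (intro cubic_le_tangent) simp
    show "L = (\<Sum>i<n. q i * q i)"
      by (simp add: L_def Lsq_def power2_eq_square)
  qed
  moreover have "m - L > 0"
    using L_bounds \<open>m \<ge> 2\<close> by simp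
  ultimately have "Lsq n (Fmap n q) \<le> L * (m - L)^2 / (m - L)^2"
    unfolding Lsq_Fmap by (fold L_def m_def) (intro divide_right_mono, auto)
  also have "\<dots> = L"
    using \<open>m - L > 0\<close> by simp
  finally show ?thesis by (simp add: L_def)
qed

theorem proposition4:
  fixes n :: nat and p :: "nat \<Rightarrow> nat \<Rightarrow> real"
  assumes "n \<ge> 2"
    and "p 0 \<in> prob_simplex n"
    and "\<And>t. p (Suc t) = Fmap n (p t)"
  shows "convergent (\<lambda>t. Lsq n (p t))"
proof -
  have in_simplex: "p t \<in> prob_simplex n" for t
    by (induction t) (use assms Fmap_in_prob_simplex in auto)
  have "decseq (\<lambda>t. Lsq n (p t))"
    by (rule decseq_SucI) (use assms Lsq_Fmap_le in_simplex in auto)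
  moreover have "Bseq (\<lambda>t. Lsq n (p t))"
    using Lsq_nonneg Lsq_le_1[OF in_simplex] by (intro BseqI'[where K = 1]) auto
  ultimately show ?thesis
    using Bseq_monoseq_convergent decseq_imp_monoseq by blast
qed

end
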